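(* Let $n,a,b\in\mathbb{Z}$ with $n\ge 1$ and $ab\ne 0$, and let $\mathcal{F}_{n,a,b}(x)=x^{2n}+ax^n+b$. Suppose that $\mathcal{F}_{n,a,b}(x)$ is irreducible over $\mathbb{Q}$ and that its Galois group over $\mathbb{Q}$ is abelian. Then $n=2^r3^s$ for some nonnegative integers $r$ and $s$. Furthermore, for every divisor $d\ge 1$ of $n$, the Galois group of $\mathcal{F}_{d,a,b}(x)=x^{2d}+ax^d+b$ over $\mathbb{Q}$ is abelian. *)

theory Defs
  imports Complex_Main "HOL-Computational_Algebra.Computational_Algebra"
begin

definition trinom :: "nat \<Rightarrow> int \<Rightarrow> int \<Rightarrow> rat poly" where
  "trinom n a b = monom 1 (2*n) + monom (of_int a) n + [:of_int b:]"

definition subfield_C :: "complex set \<Rightarrow> bool" where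
  "subfield_C K \<longleftrightarrow> 0 \<in> K \<and> 1 \<in> K \<and>
     (\<forall>x\<in>K. \<forall>y\<in>K. x + y \<in> K \<and> x * y \<in> K) \<and>
     (\<forall>x\<in>K. - x \<in> K \<and> inverse x \<in> K)"

definition splitting_field_C :: "rat poly \<Rightarrow> complex set" where
  "splitting_field_C p =
     \<Inter>{K. subfield_C K \<and> {z. poly (map_poly of_rat p) z = 0} \<subseteq> K}"

text \<open>The Galois group: field automorphisms of the splitting field (extended by the
  identity outside it, so that each automorphism is represented by a unique function).\<close>
definition galois_group_C :: "rat poly \<Rightarrow> (complex \<Rightarrow> complex) set" where
  "galois_group_C p = (let K = splitting_field_C p in
     {\<sigma>. bij_betw \<sigma> K K \<and>
         (\<forall>x\<in>K. \<forall>y\<in>K. \<sigma> (x + y) = \<sigma> x + \<sigma> y \<and> \<sigma> (x * y) = \<sigma> x * \<sigma> y) \<and>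
         (\<forall>x. x \<notin> K \<longrightarrow> \<sigma> x = x)})"

definition galois_abelian :: "rat poly \<Rightarrow> bool" where
  "galois_abelian p \<longleftrightarrow>
     (\<forall>\<sigma>\<in>galois_group_C p. \<forall>\<tau>\<in>galois_group_C p. \<sigma> \<circ> \<tau> = \<tau> \<circ> \<sigma>)"

end

theory Submission
  imports Defs "Berlekamp_Zassenhaus.Factor_Bound"
begin

(* If a prime p >= 5 divided n, then F_{p,a,b} would again be irreducible
  (F_{n,a,b} = F_{p,a,b}(x^(n/p))) with abelian Galois group (its splitting field lies
  inside that of F_{n,a,b}, and automorphisms of a subfield extend). Take a root alpha of
  x^2 + a x + b, a p-th root theta of alpha and a primitive p-th root of unity zeta; all lie
  in the splitting field. An automorphism sending theta to zeta theta commutes with all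
  others, and comparing the powers of zeta they produce on theta shows that every
  automorphism fixing alpha fixes zeta. As alpha has at most two conjugates, zeta then has at
  most two conjugates, whereas irreducibility of the p-th cyclotomic polynomial gives it the
  p - 1 >= 4 conjugates zeta^k. The second claim is the restriction argument above. *)

hide_const (open) up_ring.coeff up_ring.monom

section \<open>Subfields of the complex numbers and their homomorphisms\<close>

lemma subfield_C_0: "subfield_C E \<Longrightarrow> 0 \<in> E"
  by (simp add: subfield_C_def)

lemma subfield_C_1: "subfield_C E \<Longrightarrow> 1 \<in> E"
  by (simp add: subfield_C_def)

lemma subfield_C_add: "subfield_C E \<Longrightarrow> x \<in> E \<Longrightarrow> y \<in> E \<Longrightarrow> x + y \<in> E"
  by (simp add: subfield_C_def)

lemma subfield_C_mult: "subfield_C E \<Longrightarrow> x \<in> E \<Longrightarrow> y \<in> E \<Longrightarrow> x * y \<in> E"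
  by (simp add: subfield_C_def)

lemma subfield_C_uminus: "subfield_C E \<Longrightarrow> x \<in> E \<Longrightarrow> - x \<in> E"
  by (simp add: subfield_C_def)

lemma subfield_C_inverse: "subfield_C E \<Longrightarrow> x \<in> E \<Longrightarrow> inverse x \<in> E"
  by (simp add: subfield_C_def)

lemma subfield_C_diff: "subfield_C E \<Longrightarrow> x \<in> E \<Longrightarrow> y \<in> E \<Longrightarrow> x - y \<in> E"
  using subfield_C_add[of E x "- y"] subfield_C_uminus[of E y] by simp

lemma subfield_C_divide: "subfield_C E \<Longrightarrow> x \<in> E \<Longrightarrow> y \<in> E \<Longrightarrow> x / y \<in> E"
  using subfield_C_mult[of E x "inverse y"] subfield_C_inverse[of E y] by (simp add: divide_inverse)

lemma subfield_C_power: "subfield_C E \<Longrightarrow> x \<in> E \<Longrightarrow> x ^ n \<in> E"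
  by (induction n) (auto intro: subfield_C_1 subfield_C_mult)

lemma subfield_C_sum: "subfield_C E \<Longrightarrow> (\<And>i. i \<in> A \<Longrightarrow> f i \<in> E) \<Longrightarrow> sum f A \<in> E"
  by (induction A rule: infinite_finite_induct) (auto intro: subfield_C_0 subfield_C_add)

lemma subfield_C_of_nat: "subfield_C E \<Longrightarrow> of_nat n \<in> E"
  by (induction n) (auto intro: subfield_C_0 subfield_C_1 subfield_C_add)

lemma subfield_C_of_int: "subfield_C E \<Longrightarrow> of_int n \<in> E"
  by (cases n rule: int_cases2) (auto intro: subfield_C_of_nat subfield_C_uminus)

lemma rat_as_int_quotient:
  obtains a b where "(of_rat r :: 'a :: field_char_0) = of_int a / of_int b"
proof -
  obtain a b where "quotient_of r = (a, b)"
    by (cases "quotient_of r")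
  then have "r = of_int a / of_int b"
    by (rule quotient_of_div)
  then show thesis
    using that by (simp add: of_rat_divide)
qed

lemma subfield_C_of_rat:
  assumes "subfield_C E"
  shows "of_rat r \<in> E"
proof -
  obtain a b where "(of_rat r :: complex) = of_int a / of_int b"
    by (rule rat_as_int_quotient)
  then show ?thesis
    using assms by (simp add: subfield_C_divide subfield_C_of_int)
qed

lemma Rats_subset_subfield_C: "subfield_C E \<Longrightarrow> \<rat> \<subseteq> E"
  using subfield_C_of_rat by (auto elim: Rats_cases)

lemma subfield_C_Rats: "subfield_C \<rat>"
  unfolding subfield_C_def by (auto intro: Rats_add Rats_mult Rats_minus_iff[THEN iffD2] Rats_inverse)

lemma subfield_C_Inter: "(\<And>K. K \<in> S \<Longrightarrow> subfield_C K) \<Longrightarrow> subfield_C (\<Inter>S)"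
  unfolding subfield_C_def by auto

definition field_hom_on :: "complex set \<Rightarrow> (complex \<Rightarrow> complex) \<Rightarrow> bool" where
  "field_hom_on E \<sigma> \<longleftrightarrow>
     \<sigma> 1 = 1 \<and> (\<forall>x\<in>E. \<forall>y\<in>E. \<sigma> (x + y) = \<sigma> x + \<sigma> y \<and> \<sigma> (x * y) = \<sigma> x * \<sigma> y)"

context
  fixes E \<sigma>
  assumes E: "subfield_C E" and \<sigma>: "field_hom_on E \<sigma>"
begin

lemma field_hom_on_add: "x \<in> E \<Longrightarrow> y \<in> E \<Longrightarrow> \<sigma> (x + y) = \<sigma> x + \<sigma> y"
  using \<sigma> by (simp add: field_hom_on_def)

lemma field_hom_on_mult: "x \<in> E \<Longrightarrow> y \<in> E \<Longrightarrow> \<sigma> (x * y) = \<sigma> x * \<sigma> y"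
  using \<sigma> by (simp add: field_hom_on_def)

lemma field_hom_on_1: "\<sigma> 1 = 1"
  using \<sigma> by (simp add: field_hom_on_def)

lemma field_hom_on_0: "\<sigma> 0 = 0"
  using field_hom_on_add[OF subfield_C_0[OF E] subfield_C_0[OF E]] by simp

lemma field_hom_on_uminus: "x \<in> E \<Longrightarrow> \<sigma> (- x) = - \<sigma> x"
  using field_hom_on_add[of x "- x"] subfield_C_uminus[OF E, of x] field_hom_on_0
  by (simp add: eq_neg_iff_add_eq_0 add.commute)

lemma field_hom_on_diff: "x \<in> E \<Longrightarrow> y \<in> E \<Longrightarrow> \<sigma> (x - y) = \<sigma> x - \<sigma> y"
  using field_hom_on_add[of x "- y"] field_hom_on_uminus[of y] subfield_C_uminus[OF E, of y] by simp

lemma field_hom_on_inverse: "x \<in> E \<Longrightarrow> \<sigma> (inverse x) = inverse (\<sigma> x)"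
proof (cases "x = 0")
  case False
  assume "x \<in> E"
  then have "\<sigma> x * \<sigma> (inverse x) = 1"
    using field_hom_on_mult[of x "inverse x"] subfield_C_inverse[OF E] False field_hom_on_1 by simp
  then show ?thesis
    by (metis inverse_unique)
qed (simp add: field_hom_on_0)

lemma inj_on_field_hom: "inj_on \<sigma> E"
proof (rule inj_onI)
  fix x y
  assume xy: "x \<in> E" "y \<in> E" "\<sigma> x = \<sigma> y"
  then have "\<sigma> (inverse (x - y)) = inverse 0"
    using field_hom_on_inverse field_hom_on_diff subfield_C_diff[OF E] by simp
  then have "\<sigma> ((x - y) * inverse (x - y)) = 0"
    using field_hom_on_mult xy subfield_C_diff[OF E] subfield_C_inverse[OF E] by simp
  then show "x = y"
    using field_hom_on_1 by (cases "x = y") auto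
qed

lemma field_hom_on_divide: "x \<in> E \<Longrightarrow> y \<in> E \<Longrightarrow> \<sigma> (x / y) = \<sigma> x / \<sigma> y"
  by (simp add: divide_inverse field_hom_on_mult field_hom_on_inverse subfield_C_inverse[OF E])

lemma field_hom_on_power: "x \<in> E \<Longrightarrow> \<sigma> (x ^ n) = \<sigma> x ^ n"
  by (induction n) (simp_all add: field_hom_on_1 field_hom_on_mult subfield_C_power[OF E])

lemma field_hom_on_sum: "(\<And>i. i \<in> A \<Longrightarrow> f i \<in> E) \<Longrightarrow> \<sigma> (sum f A) = (\<Sum>i\<in>A. \<sigma> (f i))"
  by (induction A rule: infinite_finite_induct)
    (simp_all add: field_hom_on_0 field_hom_on_add subfield_C_sum[OF E])

lemma field_hom_on_of_nat: "\<sigma> (of_nat n) = of_nat n"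
  by (induction n)
    (simp_all add: field_hom_on_0 field_hom_on_1 field_hom_on_add subfield_C_of_nat[OF E] subfield_C_1[OF E])

lemma field_hom_on_of_int: "\<sigma> (of_int n) = of_int n"
  by (cases n rule: int_cases2)
    (simp_all add: field_hom_on_of_nat field_hom_on_uminus subfield_C_of_nat[OF E])

lemma field_hom_on_of_rat: "\<sigma> (of_rat r) = of_rat r"
proof -
  obtain a b where "(of_rat r :: complex) = of_int a / of_int b"
    by (rule rat_as_int_quotient)
  then show ?thesis
    by (simp add: field_hom_on_divide field_hom_on_of_int subfield_C_of_int[OF E])
qed

end

lemma subfield_C_image:
  assumes K: "subfield_C K" and \<sigma>: "field_hom_on K \<sigma>"
  shows "subfield_C (\<sigma> ` K)"
  unfolding subfield_C_def
proof (intro conjI ballI)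
  show "0 \<in> \<sigma> ` K" "1 \<in> \<sigma> ` K"
    using field_hom_on_0[OF K \<sigma>] field_hom_on_1[OF K \<sigma>] subfield_C_0[OF K] subfield_C_1[OF K]
    by (metis image_eqI)+
next
  fix x y
  assume "x \<in> \<sigma> ` K" "y \<in> \<sigma> ` K"
  then obtain u v where uv: "u \<in> K" "v \<in> K" "x = \<sigma> u" "y = \<sigma> v"
    by auto
  show "x + y \<in> \<sigma> ` K" "x * y \<in> \<sigma> ` K"
    using uv field_hom_on_add[OF K \<sigma>] field_hom_on_mult[OF K \<sigma>] subfield_C_add[OF K] subfield_C_mult[OF K]
    by (metis image_eqI)+
next
  fix x
  assume "x \<in> \<sigma> ` K"
  then obtain u where u: "u \<in> K" "x = \<sigma> u"
    by auto
  show "- x \<in> \<sigma> ` K" "inverse x \<in> \<sigma> ` K"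
    using u field_hom_on_uminus[OF K \<sigma>] field_hom_on_inverse[OF K \<sigma>]
      subfield_C_uminus[OF K] subfield_C_inverse[OF K]
    by (metis image_eqI)+
qed

lemma subfield_C_preimage:
  assumes K: "subfield_C K" and \<sigma>: "field_hom_on K \<sigma>" and L: "subfield_C L"
  shows "subfield_C {x \<in> K. \<sigma> x \<in> L}"
  unfolding subfield_C_def
  using K L
  by (auto simp: field_hom_on_0[OF K \<sigma>] field_hom_on_1[OF K \<sigma>] field_hom_on_add[OF K \<sigma>]
      field_hom_on_mult[OF K \<sigma>] field_hom_on_uminus[OF K \<sigma>] field_hom_on_inverse[OF K \<sigma>]
      intro: subfield_C_0 subfield_C_1 subfield_C_add subfield_C_mult subfield_C_uminus subfield_C_inverse)

section \<open>Simple algebraic extensions\<close>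

definition poly_over :: "complex set \<Rightarrow> complex poly \<Rightarrow> bool" where
  "poly_over E f \<longleftrightarrow> (\<forall>i. coeff f i \<in> E)"

definition algebraic_over :: "complex set \<Rightarrow> complex \<Rightarrow> bool" where
  "algebraic_over E \<alpha> \<longleftrightarrow> (\<exists>f. poly_over E f \<and> f \<noteq> 0 \<and> poly f \<alpha> = 0)"

text \<open>Some polynomial of least degree; it is not normalised to be monic.\<close>

definition min_poly :: "complex set \<Rightarrow> complex \<Rightarrow> complex poly" where
  "min_poly E \<alpha> = (SOME f. poly_over E f \<and> f \<noteq> 0 \<and> poly f \<alpha> = 0 \<and>
     (\<forall>g. poly_over E g \<and> g \<noteq> 0 \<and> poly g \<alpha> = 0 \<longrightarrow> degree f \<le> degree g))"

definition adjoin :: "complex set \<Rightarrow> complex \<Rightarrow> complex set" where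
  "adjoin E \<alpha> = {poly f \<alpha> | f. poly_over E f}"

context
  fixes E
  assumes E: "subfield_C E"
begin

lemma poly_over_0: "poly_over E 0"
  using subfield_C_0[OF E] by (simp add: poly_over_def)

lemma poly_over_const: "c \<in> E \<Longrightarrow> poly_over E [:c:]"
  using subfield_C_0[OF E] by (simp add: poly_over_def coeff_pCons split: nat.split)

lemma poly_over_X: "poly_over E [:0, 1:]"
  using subfield_C_0[OF E] subfield_C_1[OF E] by (simp add: poly_over_def coeff_pCons split: nat.split)

lemma poly_over_add: "poly_over E f \<Longrightarrow> poly_over E g \<Longrightarrow> poly_over E (f + g)"
  using subfield_C_add[OF E] by (simp add: poly_over_def)

lemma poly_over_uminus: "poly_over E f \<Longrightarrow> poly_over E (- f)"
  using subfield_C_uminus[OF E] by (simp add: poly_over_def)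

lemma poly_over_diff: "poly_over E f \<Longrightarrow> poly_over E g \<Longrightarrow> poly_over E (f - g)"
  using subfield_C_diff[OF E] by (simp add: poly_over_def)

lemma poly_over_mult: "poly_over E f \<Longrightarrow> poly_over E g \<Longrightarrow> poly_over E (f * g)"
  unfolding poly_over_def coeff_mult by (auto intro!: subfield_C_sum[OF E] subfield_C_mult[OF E])

lemma poly_over_monom: "c \<in> E \<Longrightarrow> poly_over E (monom c n)"
  using subfield_C_0[OF E] by (simp add: poly_over_def coeff_monom)

lemma poly_over_of_rat: "poly_over E (map_poly of_rat q)"
  using subfield_C_of_rat[OF E] by (simp add: poly_over_def coeff_map_poly)

lemma poly_in_subfield_C:
  "poly_over E f \<Longrightarrow> subfield_C L \<Longrightarrow> E \<subseteq> L \<Longrightarrow> x \<in> L \<Longrightarrow> poly f x \<in> L"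
  unfolding poly_altdef poly_over_def
  by (auto intro!: subfield_C_sum subfield_C_mult subfield_C_power)

lemma poly_over_cancel_lead_coeff:
  assumes f: "poly_over E f" "f \<noteq> 0" and g: "poly_over E g" "g \<noteq> 0"
    and deg: "degree g \<le> degree f"
  obtains c k where "c \<in> E" "f - monom c k * g = 0 \<or> degree (f - monom c k * g) < degree f"
proof
  define c where "c = lead_coeff f / lead_coeff g"
  define k where "k = degree f - degree g"
  show "c \<in> E"
    unfolding c_def using f g by (auto simp: poly_over_def intro: subfield_C_divide[OF E])
  have top: "coeff (f - monom c k * g) i = 0" if "i \<ge> degree f" for i
  proof (cases "i = degree f")
    case True
    then show ?thesis
      using g deg by (simp add: k_def coeff_monom_mult c_def)
  next
    case False
    then have "coeff f i = 0" "coeff g (i - k) = 0"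
      using that deg by (auto simp: k_def intro: coeff_eq_0)
    then show ?thesis
      by (simp add: coeff_monom_mult)
  qed
  show "f - monom c k * g = 0 \<or> degree (f - monom c k * g) < degree f"
  proof (cases "degree f = 0")
    case True
    then show ?thesis
      using top by (simp add: poly_eq_iff)
  next
    case False
    have "degree (f - monom c k * g) \<le> degree f - 1"
      by (rule degree_le) (use top False in auto)
    then show ?thesis
      using False by arith
  qed
qed

lemma poly_over_divmod:
  assumes "poly_over E f" and g: "poly_over E g" "g \<noteq> 0"
  obtains q r where "poly_over E q" "poly_over E r" "f = q * g + r" "r = 0 \<or> degree r < degree g"
  using assms(1)
proof (induction "degree f" arbitrary: f thesis rule: less_induct)
  case less
  show ?case
  proof (cases "f = 0 \<or> degree f < degree g")
    case True
    then show ?thesis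
      using less.prems poly_over_0 by (intro less.prems(1)[of 0 f]) auto
  next
    case False
    then obtain c k where c: "c \<in> E"
      and red: "f - monom c k * g = 0 \<or> degree (f - monom c k * g) < degree f"
      using poly_over_cancel_lead_coeff[OF less.prems(2) _ g] by auto
    have f': "poly_over E (f - monom c k * g)"
      by (intro poly_over_diff poly_over_mult poly_over_monom less.prems(2) g c)
    show ?thesis
    proof (cases "f - monom c k * g = 0")
      case True
      then show ?thesis
        using poly_over_monom[OF c] poly_over_0 by (intro less.prems(1)[of "monom c k" 0]) auto
    next
      case False
      obtain q r where qr: "poly_over E q" "poly_over E r" "f - monom c k * g = q * g + r"
        "r = 0 \<or> degree r < degree g"
        using less.hyps[OF _ _ f'] red False by metis
      have "f = (q + monom c k) * g + r"
        using qr(3) by (simp add: algebra_simps)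
      then show ?thesis
        using less.prems(1)[OF poly_over_add[OF qr(1) poly_over_monom[OF c]] qr(2) _ qr(4)] by blast
    qed
  qed
qed

end

lemma min_poly_spec:
  assumes "algebraic_over E \<alpha>"
  shows "poly_over E (min_poly E \<alpha>) \<and> min_poly E \<alpha> \<noteq> 0 \<and> poly (min_poly E \<alpha>) \<alpha> = 0 \<and>
    (\<forall>g. poly_over E g \<and> g \<noteq> 0 \<and> poly g \<alpha> = 0 \<longrightarrow> degree (min_poly E \<alpha>) \<le> degree g)"
proof -
  obtain f where "poly_over E f \<and> f \<noteq> 0 \<and> poly f \<alpha> = 0"
    using assms unfolding algebraic_over_def by blast
  then have "\<exists>f. poly_over E f \<and> f \<noteq> 0 \<and> poly f \<alpha> = 0 \<and>
      (\<forall>g. poly_over E g \<and> g \<noteq> 0 \<and> poly g \<alpha> = 0 \<longrightarrow> degree f \<le> degree g)"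
    using ex_has_least_nat[of "\<lambda>f. poly_over E f \<and> f \<noteq> 0 \<and> poly f \<alpha> = 0" _ degree] by blast
  then show ?thesis
    unfolding min_poly_def by (rule someI_ex)
qed

lemma poly_over_min_poly: "algebraic_over E \<alpha> \<Longrightarrow> poly_over E (min_poly E \<alpha>)"
  using min_poly_spec by blast

lemma min_poly_nonzero: "algebraic_over E \<alpha> \<Longrightarrow> min_poly E \<alpha> \<noteq> 0"
  using min_poly_spec by blast

lemma min_poly_root: "algebraic_over E \<alpha> \<Longrightarrow> poly (min_poly E \<alpha>) \<alpha> = 0"
  using min_poly_spec by blast

lemma degree_min_poly_le:
  "algebraic_over E \<alpha> \<Longrightarrow> poly_over E g \<Longrightarrow> g \<noteq> 0 \<Longrightarrow> poly g \<alpha> = 0 \<Longrightarrow>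
    degree (min_poly E \<alpha>) \<le> degree g"
  using min_poly_spec by blast

lemma degree_min_poly_pos: "algebraic_over E \<alpha> \<Longrightarrow> 0 < degree (min_poly E \<alpha>)"
  using min_poly_nonzero min_poly_root by (fastforce elim: degree_eq_zeroE)

context
  fixes E \<alpha>
  assumes E: "subfield_C E" and \<alpha>: "algebraic_over E \<alpha>"
begin

lemma min_poly_dvd:
  assumes "poly_over E g" "poly g \<alpha> = 0"
  obtains q where "poly_over E q" "g = q * min_poly E \<alpha>"
proof -
  obtain q r where qr: "poly_over E q" "poly_over E r" "g = q * min_poly E \<alpha> + r"
    "r = 0 \<or> degree r < degree (min_poly E \<alpha>)"
    using poly_over_divmod[OF E assms(1) poly_over_min_poly min_poly_nonzero, OF \<alpha> \<alpha>] .
  have "poly r \<alpha> = 0"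
    using qr(3) assms(2) min_poly_root[OF \<alpha>] by simp
  then have "r = 0"
    using qr(2,4) degree_min_poly_le[OF \<alpha> qr(2)] by force
  then show ?thesis
    using that qr by simp
qed

lemma min_poly_division_step:
  assumes f: "poly_over E f" "poly f \<alpha> \<noteq> 0" "0 < degree f" "degree f < degree (min_poly E \<alpha>)"
  obtains q r where "poly_over E q" "poly_over E r" "poly q \<alpha> * poly f \<alpha> + poly r \<alpha> = 0"
    "poly r \<alpha> \<noteq> 0" "degree r < degree f"
proof -
  let ?m = "min_poly E \<alpha>"
  have f0: "f \<noteq> 0"
    using f(2) by auto
  obtain q r where qr: "poly_over E q" "poly_over E r" "?m = q * f + r" "r = 0 \<or> degree r < degree f"
    using poly_over_divmod[OF E poly_over_min_poly[OF \<alpha>] f(1) f0] .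
  have eval: "poly q \<alpha> * poly f \<alpha> + poly r \<alpha> = 0"
    using qr(3) min_poly_root[OF \<alpha>] by (metis poly_add poly_mult)
  have "q \<noteq> 0"
    using qr(3,4) f(4) min_poly_nonzero[OF \<alpha>] by auto
  then have "degree q < degree ?m"
    using qr(3,4) f(3) f0 by (auto simp: degree_add_eq_left degree_mult_eq)
  then have "poly q \<alpha> \<noteq> 0"
    using degree_min_poly_le[OF \<alpha> qr(1) \<open>q \<noteq> 0\<close>] by linarith
  then have "poly r \<alpha> \<noteq> 0"
    using eval f(2) by auto
  moreover from this have "degree r < degree f"
    using qr(4) by auto
  ultimately show ?thesis
    using that qr(1,2) eval by blast
qed

text \<open>Euclid's algorithm, run against the polynomial of least degree vanishing at \<open>\<alpha>\<close>.\<close>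

lemma poly_over_inverse_at:
  assumes "poly_over E f" "poly f \<alpha> \<noteq> 0"
  obtains u where "poly_over E u" "poly u \<alpha> * poly f \<alpha> = 1"
  using assms
proof (induction "degree f" arbitrary: f thesis rule: less_induct)
  case less
  let ?m = "min_poly E \<alpha>"
  consider "degree f = 0" | "0 < degree f" "degree f < degree ?m" | "degree ?m \<le> degree f"
    by linarith
  then show ?case
  proof cases
    case 1
    then obtain c where c: "f = [:c:]"
      by (rule degree_eq_zeroE)
    then have "c \<in> E"
      using less.prems(2) by (auto simp: poly_over_def dest: spec[of _ 0])
    then show ?thesis
      using c less.prems(3) poly_over_const[OF E subfield_C_inverse[OF E]]
      by (intro less.prems(1)[of "[:inverse c:]"]) auto
  next
    case 2
    obtain q r where qr: "poly_over E q" "poly_over E r" "poly q \<alpha> * poly f \<alpha> + poly r \<alpha> = 0"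
      "poly r \<alpha> \<noteq> 0" "degree r < degree f"
      using min_poly_division_step[OF less.prems(2,3) 2] .
    obtain u where u: "poly_over E u" "poly u \<alpha> * poly r \<alpha> = 1"
      using less.hyps[OF qr(5) _ qr(2,4)] by metis
    have "poly (- (u * q)) \<alpha> * poly f \<alpha> = 1"
      using u(2) qr(3) by (simp add: algebra_simps eq_neg_iff_add_eq_0[symmetric])
    then show ?thesis
      using less.prems(1) poly_over_uminus[OF E poly_over_mult[OF E u(1) qr(1)]] by blast
  next
    case 3
    obtain q r where qr: "poly_over E q" "poly_over E r" "f = q * ?m + r" "r = 0 \<or> degree r < degree ?m"
      using poly_over_divmod[OF E less.prems(2) poly_over_min_poly min_poly_nonzero, OF \<alpha> \<alpha>] .
    have "poly r \<alpha> = poly f \<alpha>"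
      using qr(3) min_poly_root[OF \<alpha>] by simp
    moreover from this have "degree r < degree f"
      using qr(4) 3 less.prems(3) by auto
    ultimately show ?thesis
      using less.hyps[OF _ _ qr(2)] less.prems(1,3) by metis
  qed
qed

lemma subset_adjoin: "E \<subseteq> adjoin E \<alpha>"
  unfolding adjoin_def using poly_over_const[OF E] by (auto intro!: exI[of _ "[:_:]"])

lemma generator_in_adjoin: "\<alpha> \<in> adjoin E \<alpha>"
  unfolding adjoin_def using poly_over_X[OF E] by (auto intro!: exI[of _ "[:0, 1:]"])

lemma adjoin_subset: "subfield_C L \<Longrightarrow> E \<subseteq> L \<Longrightarrow> \<alpha> \<in> L \<Longrightarrow> adjoin E \<alpha> \<subseteq> L"
  unfolding adjoin_def using poly_in_subfield_C[OF E] by auto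

lemma subfield_C_adjoin: "subfield_C (adjoin E \<alpha>)"
  unfolding subfield_C_def
proof (intro conjI ballI)
  show "0 \<in> adjoin E \<alpha>" "1 \<in> adjoin E \<alpha>"
    using subset_adjoin subfield_C_0[OF E] subfield_C_1[OF E] by auto
next
  fix x y
  assume "x \<in> adjoin E \<alpha>" "y \<in> adjoin E \<alpha>"
  then obtain f g where fg: "poly_over E f" "x = poly f \<alpha>" "poly_over E g" "y = poly g \<alpha>"
    unfolding adjoin_def by auto
  show "x + y \<in> adjoin E \<alpha>"
    unfolding adjoin_def using fg poly_over_add[OF E] by (auto intro!: exI[of _ "f + g"])
  show "x * y \<in> adjoin E \<alpha>"
    unfolding adjoin_def using fg poly_over_mult[OF E] by (auto intro!: exI[of _ "f * g"])
next
  fix x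
  assume "x \<in> adjoin E \<alpha>"
  then obtain f where f: "poly_over E f" "x = poly f \<alpha>"
    unfolding adjoin_def by auto
  then show "- x \<in> adjoin E \<alpha>"
    unfolding adjoin_def using poly_over_uminus[OF E] by (auto intro!: exI[of _ "- f"])
  show "inverse x \<in> adjoin E \<alpha>"
  proof (cases "x = 0")
    case False
    then obtain u where "poly_over E u" "poly u \<alpha> * x = 1"
      using poly_over_inverse_at[OF f(1)] f(2) by auto
    moreover from this have "inverse x = poly u \<alpha>"
      by (metis inverse_unique mult.commute)
    ultimately show ?thesis
      unfolding adjoin_def by auto
  qed (use subset_adjoin subfield_C_0[OF E] in auto)
qed

end

context
  fixes E \<sigma>
  assumes E: "subfield_C E" and \<sigma>: "field_hom_on E \<sigma>"
begin

lemma coeff_map_poly_hom: "coeff (map_poly \<sigma> f) i = \<sigma> (coeff f i)"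
  using field_hom_on_0[OF E \<sigma>] by (simp add: coeff_map_poly)

lemma map_poly_hom_add: "poly_over E f \<Longrightarrow> poly_over E g \<Longrightarrow> map_poly \<sigma> (f + g) = map_poly \<sigma> f + map_poly \<sigma> g"
  by (simp add: poly_eq_iff coeff_map_poly_hom field_hom_on_add[OF E \<sigma>] poly_over_def)

lemma map_poly_hom_diff: "poly_over E f \<Longrightarrow> poly_over E g \<Longrightarrow> map_poly \<sigma> (f - g) = map_poly \<sigma> f - map_poly \<sigma> g"
  by (simp add: poly_eq_iff coeff_map_poly_hom field_hom_on_diff[OF E \<sigma>] poly_over_def)

lemma map_poly_hom_mult: "poly_over E f \<Longrightarrow> poly_over E g \<Longrightarrow> map_poly \<sigma> (f * g) = map_poly \<sigma> f * map_poly \<sigma> g"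
  unfolding poly_eq_iff coeff_map_poly_hom coeff_mult
  by (subst field_hom_on_sum[OF E \<sigma>])
    (auto simp: poly_over_def field_hom_on_mult[OF E \<sigma>] intro!: subfield_C_mult[OF E] sum.cong)

lemma map_poly_hom_const: "c \<in> E \<Longrightarrow> map_poly \<sigma> [:c:] = [:\<sigma> c:]"
  by (simp add: poly_eq_iff coeff_map_poly_hom field_hom_on_0[OF E \<sigma>] coeff_pCons split: nat.split)

lemma map_poly_hom_X: "map_poly \<sigma> [:0, 1:] = [:0, 1:]"
  by (simp add: poly_eq_iff coeff_map_poly_hom field_hom_on_0[OF E \<sigma>] field_hom_on_1[OF E \<sigma>]
      coeff_pCons split: nat.split)

lemma map_poly_hom_of_rat: "map_poly \<sigma> (map_poly of_rat q) = map_poly of_rat q"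
  by (simp add: poly_eq_iff coeff_map_poly_hom coeff_map_poly field_hom_on_of_rat[OF E \<sigma>])

lemma degree_map_poly_hom:
  assumes "poly_over E f"
  shows "degree (map_poly \<sigma> f) = degree f"
proof -
  have "coeff (map_poly \<sigma> f) i = 0 \<longleftrightarrow> coeff f i = 0" for i
    using assms inj_on_field_hom[OF E \<sigma>] field_hom_on_0[OF E \<sigma>] subfield_C_0[OF E]
    unfolding coeff_map_poly_hom poly_over_def by (metis inj_onD)
  then show ?thesis
    by (simp add: degree_def)
qed

lemma poly_map_poly_hom:
  assumes f: "poly_over E f" and x: "x \<in> E"
  shows "poly (map_poly \<sigma> f) (\<sigma> x) = \<sigma> (poly f x)"
proof -
  have "poly (map_poly \<sigma> f) (\<sigma> x) = (\<Sum>i\<le>degree f. \<sigma> (coeff f i * x ^ i))"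
    unfolding poly_altdef degree_map_poly_hom[OF f] using f x
    by (intro sum.cong) (auto simp: coeff_map_poly_hom poly_over_def field_hom_on_mult[OF E \<sigma>]
        field_hom_on_power[OF E \<sigma>] subfield_C_power[OF E])
  also have "\<dots> = \<sigma> (poly f x)"
    unfolding poly_altdef using f x
    by (intro field_hom_on_sum[OF E \<sigma>, symmetric])
      (auto simp: poly_over_def intro!: subfield_C_mult[OF E] subfield_C_power[OF E])
  finally show ?thesis .
qed

end

definition extend_hom ::
    "complex set \<Rightarrow> (complex \<Rightarrow> complex) \<Rightarrow> complex \<Rightarrow> complex \<Rightarrow> complex \<Rightarrow> complex" where
  "extend_hom E \<sigma> \<alpha> \<beta> x = (SOME y. \<exists>f. poly_over E f \<and> x = poly f \<alpha> \<and> y = poly (map_poly \<sigma> f) \<beta>)"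

context
  fixes E \<sigma> \<alpha> \<beta>
  assumes E: "subfield_C E" and \<sigma>: "field_hom_on E \<sigma>" and \<alpha>: "algebraic_over E \<alpha>"
    and \<beta>: "poly (map_poly \<sigma> (min_poly E \<alpha>)) \<beta> = 0"
begin

lemma extend_hom_poly:
  assumes f: "poly_over E f"
  shows "extend_hom E \<sigma> \<alpha> \<beta> (poly f \<alpha>) = poly (map_poly \<sigma> f) \<beta>"
proof -
  have well_defined: "poly (map_poly \<sigma> f) \<beta> = poly (map_poly \<sigma> g) \<beta>"
    if g: "poly_over E g" "poly f \<alpha> = poly g \<alpha>" for g
  proof -
    obtain q where q: "poly_over E q" "f - g = q * min_poly E \<alpha>"
      using min_poly_dvd[OF E \<alpha> poly_over_diff[OF E f g(1)]] g(2) by auto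
    then have "map_poly \<sigma> f - map_poly \<sigma> g = map_poly \<sigma> q * map_poly \<sigma> (min_poly E \<alpha>)"
      using map_poly_hom_diff[OF E \<sigma> f g(1)] map_poly_hom_mult[OF E \<sigma> q(1) poly_over_min_poly[OF \<alpha>]]
      by simp
    then show ?thesis
      using \<beta> by (metis eq_iff_diff_eq_0 mult_zero_right poly_diff poly_mult)
  qed
  have "\<exists>g. poly_over E g \<and> poly f \<alpha> = poly g \<alpha> \<and> extend_hom E \<sigma> \<alpha> \<beta> (poly f \<alpha>) = poly (map_poly \<sigma> g) \<beta>"
    unfolding extend_hom_def by (rule someI_ex) (use f in blast)
  then show ?thesis
    using well_defined by metis
qed

lemma field_hom_on_extend_hom: "field_hom_on (adjoin E \<alpha>) (extend_hom E \<sigma> \<alpha> \<beta>)"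
  unfolding field_hom_on_def
proof (intro conjI ballI)
  show "extend_hom E \<sigma> \<alpha> \<beta> 1 = 1"
    using extend_hom_poly[OF poly_over_const[OF E subfield_C_1[OF E]]]
      map_poly_hom_const[OF E \<sigma> subfield_C_1[OF E]] field_hom_on_1[OF E \<sigma>]
    by simp
  fix x y
  assume "x \<in> adjoin E \<alpha>" "y \<in> adjoin E \<alpha>"
  then obtain f g where f: "poly_over E f" "x = poly f \<alpha>" and g: "poly_over E g" "y = poly g \<alpha>"
    by (auto simp: adjoin_def)
  show "extend_hom E \<sigma> \<alpha> \<beta> (x + y) = extend_hom E \<sigma> \<alpha> \<beta> x + extend_hom E \<sigma> \<alpha> \<beta> y"
    using extend_hom_poly[OF poly_over_add[OF E f(1) g(1)]] extend_hom_poly[OF f(1)]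
      extend_hom_poly[OF g(1)] map_poly_hom_add[OF E \<sigma> f(1) g(1)] f(2) g(2)
    by simp
  show "extend_hom E \<sigma> \<alpha> \<beta> (x * y) = extend_hom E \<sigma> \<alpha> \<beta> x * extend_hom E \<sigma> \<alpha> \<beta> y"
    using extend_hom_poly[OF poly_over_mult[OF E f(1) g(1)]] extend_hom_poly[OF f(1)]
      extend_hom_poly[OF g(1)] map_poly_hom_mult[OF E \<sigma> f(1) g(1)] f(2) g(2)
    by simp
qed

lemma extend_hom_on_base: "x \<in> E \<Longrightarrow> extend_hom E \<sigma> \<alpha> \<beta> x = \<sigma> x"
  using extend_hom_poly[OF poly_over_const[OF E], of x] map_poly_hom_const[OF E \<sigma>, of x] by simp

lemma extend_hom_generator: "extend_hom E \<sigma> \<alpha> \<beta> \<alpha> = \<beta>"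
  using extend_hom_poly[OF poly_over_X[OF E]] map_poly_hom_X[OF E \<sigma>] by simp

end

section \<open>Splitting fields and Galois groups\<close>

definition complex_roots :: "rat poly \<Rightarrow> complex set" where
  "complex_roots P = {z. poly (map_poly of_rat P) z = 0}"

lemma finite_complex_roots: "P \<noteq> 0 \<Longrightarrow> finite (complex_roots P)"
  unfolding complex_roots_def by (intro poly_roots_finite) simp

lemma algebraic_over_complex_root: "subfield_C E \<Longrightarrow> P \<noteq> 0 \<Longrightarrow> x \<in> complex_roots P \<Longrightarrow> algebraic_over E x"
  unfolding algebraic_over_def complex_roots_def using poly_over_of_rat by force

lemma subfield_C_splitting_field: "subfield_C (splitting_field_C P)"
  unfolding splitting_field_C_def by (rule subfield_C_Inter) auto

lemma complex_roots_subset_splitting_field: "complex_roots P \<subseteq> splitting_field_C P"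
  unfolding splitting_field_C_def complex_roots_def by auto

lemma splitting_field_C_subset: "subfield_C L \<Longrightarrow> complex_roots P \<subseteq> L \<Longrightarrow> splitting_field_C P \<subseteq> L"
  unfolding splitting_field_C_def complex_roots_def by auto

lemma field_hom_on_complex_root:
  assumes "subfield_C K" "field_hom_on K \<sigma>" "x \<in> K" "x \<in> complex_roots Q"
  shows "\<sigma> x \<in> complex_roots Q"
  using poly_map_poly_hom[OF assms(1,2) poly_over_of_rat[OF assms(1)] assms(3), of Q] assms
  by (simp add: complex_roots_def map_poly_hom_of_rat field_hom_on_0)

lemma field_hom_extends_to_adjunction:
  assumes "finite S" and K: "subfield_C K" "S \<subseteq> K" and P: "P \<noteq> 0" "S \<subseteq> complex_roots P"
    and E: "subfield_C E" "E \<subseteq> K" and \<sigma>: "field_hom_on E \<sigma>"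
  obtains E' \<sigma>' where "subfield_C E'" "E \<union> S \<subseteq> E'" "E' \<subseteq> K" "field_hom_on E' \<sigma>'"
    "\<forall>x\<in>E. \<sigma>' x = \<sigma> x"
  using assms(1,3,5)
proof (induction S arbitrary: thesis rule: finite_induct)
  case empty
  then show ?case
    using E \<sigma> by auto
next
  case (insert s S)
  then obtain E1 \<sigma>1 where E1: "subfield_C E1" "E \<union> S \<subseteq> E1" "E1 \<subseteq> K" "field_hom_on E1 \<sigma>1"
    "\<forall>x\<in>E. \<sigma>1 x = \<sigma> x"
    by (metis insert_subset)
  have s: "algebraic_over E1 s"
    using algebraic_over_complex_root[OF E1(1) P(1)] insert.prems by blast
  have "0 < degree (map_poly \<sigma>1 (min_poly E1 s))"
    using degree_map_poly_hom[OF E1(1,4) poly_over_min_poly[OF s]] degree_min_poly_pos[OF s] by simp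
  then obtain \<beta> where \<beta>: "poly (map_poly \<sigma>1 (min_poly E1 s)) \<beta> = 0"
    using alg_closed_imp_poly_has_root by blast
  show ?case
  proof (rule insert.prems(1))
    show "subfield_C (adjoin E1 s)"
      by (rule subfield_C_adjoin[OF E1(1) s])
    show "E \<union> insert s S \<subseteq> adjoin E1 s"
      using E1(2) subset_adjoin[OF E1(1) s] generator_in_adjoin[OF E1(1) s] by blast
    show "adjoin E1 s \<subseteq> K"
      using adjoin_subset[OF E1(1) s K(1) E1(3)] insert.prems(2) by blast
    show "field_hom_on (adjoin E1 s) (extend_hom E1 \<sigma>1 s \<beta>)"
      by (rule field_hom_on_extend_hom[OF E1(1,4) s \<beta>])
    show "\<forall>x\<in>E. extend_hom E1 \<sigma>1 s \<beta> x = \<sigma> x"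
      using extend_hom_on_base[OF E1(1,4) s \<beta>] E1(2,5) by auto
  qed
qed

lemma field_hom_on_splitting_field_onto:
  assumes P: "P \<noteq> 0" and \<sigma>: "field_hom_on (splitting_field_C P) \<sigma>"
  shows "\<sigma> ` splitting_field_C P = splitting_field_C P"
proof -
  let ?K = "splitting_field_C P" and ?S = "complex_roots P"
  note K = subfield_C_splitting_field[of P]
  have "\<sigma> ` ?S \<subseteq> ?S"
    using field_hom_on_complex_root[OF K \<sigma>] complex_roots_subset_splitting_field by blast
  moreover have "inj_on \<sigma> ?S"
    using inj_on_field_hom[OF K \<sigma>] complex_roots_subset_splitting_field by (rule inj_on_subset)
  ultimately have roots: "\<sigma> ` ?S = ?S"
    using endo_inj_surj[OF finite_complex_roots[OF P]] by blast
  have "?K \<subseteq> {x \<in> ?K. \<sigma> x \<in> ?K}"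
    using subfield_C_preimage[OF K \<sigma> K] roots complex_roots_subset_splitting_field
    by (intro splitting_field_C_subset) auto
  moreover have "?S \<subseteq> \<sigma> ` ?K"
    using roots image_mono[OF complex_roots_subset_splitting_field[of P], of \<sigma>] by simp
  then have "?K \<subseteq> \<sigma> ` ?K"
    by (rule splitting_field_C_subset[OF subfield_C_image[OF K \<sigma>]])
  ultimately show ?thesis
    by blast
qed

lemma restricted_hom_in_galois_group_C:
  assumes \<sigma>: "field_hom_on (splitting_field_C P) \<sigma>" and onto: "\<sigma> ` splitting_field_C P = splitting_field_C P"
  shows "(\<lambda>x. if x \<in> splitting_field_C P then \<sigma> x else x) \<in> galois_group_C P"
  unfolding galois_group_C_def Let_def
proof (intro CollectI conjI ballI allI impI)
  let ?K = "splitting_field_C P" and ?g = "\<lambda>x. if x \<in> splitting_field_C P then \<sigma> x else x"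
  note K = subfield_C_splitting_field[of P]
  have "inj_on ?g ?K"
    using inj_on_field_hom[OF K \<sigma>] by (simp add: inj_on_def)
  moreover have "?g ` ?K = ?K"
    using onto by simp
  ultimately show "bij_betw ?g ?K ?K"
    by (simp add: bij_betw_def)
  fix x y
  assume "x \<in> ?K" "y \<in> ?K"
  then show "?g (x + y) = ?g x + ?g y" "?g (x * y) = ?g x * ?g y"
    using subfield_C_add[OF K] subfield_C_mult[OF K] field_hom_on_add[OF K \<sigma>] field_hom_on_mult[OF K \<sigma>]
    by auto
qed simp

theorem galois_group_C_extends_hom:
  assumes P: "P \<noteq> 0" and E: "subfield_C E" "E \<subseteq> splitting_field_C P" and \<sigma>: "field_hom_on E \<sigma>"
  obtains g where "g \<in> galois_group_C P" "\<forall>x\<in>E. g x = \<sigma> x"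
proof -
  let ?K = "splitting_field_C P"
  obtain E' \<sigma>' where E': "subfield_C E'" "E \<union> complex_roots P \<subseteq> E'" "E' \<subseteq> ?K"
    "field_hom_on E' \<sigma>'" "\<forall>x\<in>E. \<sigma>' x = \<sigma> x"
    using field_hom_extends_to_adjunction[OF finite_complex_roots[OF P] subfield_C_splitting_field
        complex_roots_subset_splitting_field P subset_refl E \<sigma>] .
  have "E' = ?K"
    using splitting_field_C_subset[OF E'(1)] E'(2,3) by blast
  then have "field_hom_on ?K \<sigma>'"
    using E'(4) by simp
  then have "(\<lambda>x. if x \<in> ?K then \<sigma>' x else x) \<in> galois_group_C P"
    by (intro restricted_hom_in_galois_group_C field_hom_on_splitting_field_onto P)
  moreover have "\<forall>x\<in>E. (if x \<in> ?K then \<sigma>' x else x) = \<sigma> x"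
    using E'(5) E(2) by auto
  ultimately show ?thesis
    using that by blast
qed

context
  fixes P g
  assumes g: "g \<in> galois_group_C P"
begin

lemma galois_group_C_bij: "bij_betw g (splitting_field_C P) (splitting_field_C P)"
  using g unfolding galois_group_C_def Let_def by auto

lemma galois_group_C_outside: "x \<notin> splitting_field_C P \<Longrightarrow> g x = x"
  using g unfolding galois_group_C_def Let_def by auto

lemma galois_group_C_inj_on: "inj_on g (splitting_field_C P)"
  using galois_group_C_bij by (simp add: bij_betw_def)

lemma galois_group_C_maps_to: "x \<in> splitting_field_C P \<Longrightarrow> g x \<in> splitting_field_C P"
  using galois_group_C_bij by (auto simp: bij_betw_def)

lemma field_hom_on_galois_group_C: "field_hom_on (splitting_field_C P) g"
proof -
  let ?K = "splitting_field_C P"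
  note K = subfield_C_splitting_field[of P]
  have hom: "\<forall>x\<in>?K. \<forall>y\<in>?K. g (x + y) = g x + g y \<and> g (x * y) = g x * g y"
    using g unfolding galois_group_C_def Let_def by auto
  have "g 0 = g 0 + g 0"
    using hom subfield_C_0[OF K] by (metis add_0)
  then have "g 0 = 0"
    by simp
  moreover have "g 1 = g 1 * g 1"
    using hom subfield_C_1[OF K] by (metis mult_1)
  moreover have "g 1 \<noteq> g 0"
    using galois_group_C_inj_on subfield_C_0[OF K] subfield_C_1[OF K] by (metis inj_on_eq_iff zero_neq_one)
  ultimately have "g 1 = 1"
    by (metis mult_cancel_right1 mult_eq_0_iff)
  then show ?thesis
    using hom unfolding field_hom_on_def by auto
qed

end

lemma galois_group_C_comp:
  assumes g: "g \<in> galois_group_C P" and h: "h \<in> galois_group_C P"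
  shows "g \<circ> h \<in> galois_group_C P"
  unfolding galois_group_C_def Let_def
proof (intro CollectI conjI ballI allI impI)
  let ?K = "splitting_field_C P"
  note K = subfield_C_splitting_field[of P]
  show "bij_betw (g \<circ> h) ?K ?K"
    using galois_group_C_bij[OF g] galois_group_C_bij[OF h] by (rule bij_betw_trans[rotated])
  fix x y
  assume "x \<in> ?K" "y \<in> ?K"
  then show "(g \<circ> h) (x + y) = (g \<circ> h) x + (g \<circ> h) y" "(g \<circ> h) (x * y) = (g \<circ> h) x * (g \<circ> h) y"
    using field_hom_on_add[OF K field_hom_on_galois_group_C[OF g]] field_hom_on_add[OF K field_hom_on_galois_group_C[OF h]]
      field_hom_on_mult[OF K field_hom_on_galois_group_C[OF g]] field_hom_on_mult[OF K field_hom_on_galois_group_C[OF h]]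
      galois_group_C_maps_to[OF h]
    by simp_all
qed (simp add: galois_group_C_outside[OF g] galois_group_C_outside[OF h])

lemma galois_abelian_mono:
  assumes P: "P \<noteq> 0" and sub: "splitting_field_C Q \<subseteq> splitting_field_C P" and ab: "galois_abelian P"
  shows "galois_abelian Q"
  unfolding galois_abelian_def
proof (intro ballI ext)
  fix \<sigma> \<tau> x
  assume \<sigma>: "\<sigma> \<in> galois_group_C Q" and \<tau>: "\<tau> \<in> galois_group_C Q"
  let ?K = "splitting_field_C Q"
  obtain \<sigma>' where \<sigma>': "\<sigma>' \<in> galois_group_C P" "\<forall>x\<in>?K. \<sigma>' x = \<sigma> x"
    using galois_group_C_extends_hom[OF P subfield_C_splitting_field sub field_hom_on_galois_group_C[OF \<sigma>]] .
  obtain \<tau>' where \<tau>': "\<tau>' \<in> galois_group_C P" "\<forall>x\<in>?K. \<tau>' x = \<tau> x"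
    using galois_group_C_extends_hom[OF P subfield_C_splitting_field sub field_hom_on_galois_group_C[OF \<tau>]] .
  have "\<sigma>' (\<tau>' x) = \<tau>' (\<sigma>' x)"
    using ab \<sigma>'(1) \<tau>'(1) unfolding galois_abelian_def by (metis comp_apply)
  then show "(\<sigma> \<circ> \<tau>) x = (\<tau> \<circ> \<sigma>) x"
    using \<sigma>'(2) \<tau>'(2) galois_group_C_maps_to[OF \<sigma>] galois_group_C_maps_to[OF \<tau>]
      galois_group_C_outside[OF \<sigma>] galois_group_C_outside[OF \<tau>]
    by (cases "x \<in> ?K") auto
qed

lemma poly_over_Rats_imp_map_poly_of_rat:
  assumes "poly_over \<rat> m"
  obtains m' where "m = map_poly of_rat m'"
proof -
  define to_rat where "to_rat = (\<lambda>c::complex. SOME r. c = of_rat r)"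
  have of_rat_to_rat: "of_rat (to_rat c) = c" if c: "c \<in> \<rat>" for c
  proof -
    obtain r where "c = of_rat r"
      using c by (auto elim: Rats_cases)
    then have "c = of_rat (to_rat c)"
      unfolding to_rat_def by (rule someI)
    then show ?thesis
      by simp
  qed
  have "to_rat 0 = 0"
    using of_rat_to_rat[of 0] by simp
  then have "m = map_poly of_rat (map_poly to_rat m)"
    using assms by (simp add: poly_eq_iff coeff_map_poly poly_over_def of_rat_to_rat)
  then show ?thesis
    using that by blast
qed

lemma map_poly_of_rat_mult:
  "map_poly (of_rat :: rat \<Rightarrow> 'a :: field_char_0) (p * q) = map_poly of_rat p * map_poly of_rat q"
  by (simp add: poly_eq_iff coeff_map_poly coeff_mult of_rat_sum of_rat_mult)

lemma min_poly_Rats_irreducible_root: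
  assumes Q: "irreducible Q" and x: "x \<in> complex_roots Q" and y: "y \<in> complex_roots Q"
  shows "poly (min_poly \<rat> x) y = 0"
proof -
  have Q0: "Q \<noteq> 0"
    using Q by auto
  have x_alg: "algebraic_over \<rat> x"
    by (rule algebraic_over_complex_root[OF subfield_C_Rats Q0 x])
  obtain m where m: "min_poly \<rat> x = map_poly of_rat m"
    using poly_over_Rats_imp_map_poly_of_rat[OF poly_over_min_poly[OF x_alg]] .
  have m0: "m \<noteq> 0" and m_deg: "degree m \<noteq> 0"
    using min_poly_nonzero[OF x_alg] degree_min_poly_pos[OF x_alg] m by auto
  have "poly (map_poly of_rat Q) x =
      poly (map_poly of_rat (Q div m)) x * poly (map_poly of_rat m) x + poly (map_poly of_rat (Q mod m)) x"
    by (subst div_mult_mod_eq[symmetric, of Q m]) (simp only: map_poly_of_rat_mult hom_distribs poly_add poly_mult)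
  then have root: "poly (map_poly of_rat (Q mod m)) x = 0"
    using x min_poly_root[OF x_alg] m by (simp add: complex_roots_def)
  have "Q mod m = 0"
  proof (rule ccontr)
    assume "Q mod m \<noteq> 0"
    then have "degree (min_poly \<rat> x) \<le> degree (Q mod m)"
      using degree_min_poly_le[OF x_alg poly_over_of_rat[OF subfield_C_Rats] _ root] by simp
    then show False
      using degree_mod_less[OF m0, of Q] \<open>Q mod m \<noteq> 0\<close> m by simp
  qed
  then have Q_eq: "Q = (Q div m) * m"
    by (metis add_0_right div_mult_mod_eq)
  have "\<not> is_unit m"
    using m_deg is_unit_iff_degree[OF m0] by simp
  then have "is_unit (Q div m)"
    using irreducibleD[OF Q Q_eq] by blast
  then obtain c where c: "Q div m = [:c:]" "c \<noteq> 0"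
    by (metis is_unit_polyE' monom_0)
  have "poly (map_poly of_rat Q) y = of_rat c * poly (min_poly \<rat> x) y"
    by (subst Q_eq) (simp add: c m map_poly_smult of_rat_mult)
  then show ?thesis
    using y c(2) by (simp add: complex_roots_def)
qed

theorem galois_group_C_transitive:
  assumes P: "P \<noteq> 0" and Q: "irreducible Q" and x: "x \<in> splitting_field_C P"
    and x_root: "x \<in> complex_roots Q" and y_root: "y \<in> complex_roots Q"
  obtains g where "g \<in> galois_group_C P" "g x = y"
proof -
  note Rats = subfield_C_Rats
  have x_alg: "algebraic_over \<rat> x"
    using algebraic_over_complex_root[OF Rats _ x_root] Q by auto
  have y: "poly (map_poly id (min_poly \<rat> x)) y = 0"
    using min_poly_Rats_irreducible_root[OF Q x_root y_root] by simp
  have id: "field_hom_on \<rat> id"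
    by (simp add: field_hom_on_def)
  have sub: "adjoin \<rat> x \<subseteq> splitting_field_C P"
    using adjoin_subset[OF Rats x_alg subfield_C_splitting_field] x
      Rats_subset_subfield_C[OF subfield_C_splitting_field] by blast
  obtain g where g: "g \<in> galois_group_C P" and "\<forall>z\<in>adjoin \<rat> x. g z = extend_hom \<rat> id x y z"
    using galois_group_C_extends_hom[OF P subfield_C_adjoin[OF Rats x_alg] sub field_hom_on_extend_hom[OF Rats id x_alg y]] .
  then have "g x = y"
    using generator_in_adjoin[OF Rats x_alg] extend_hom_generator[OF Rats id x_alg y] by simp
  with g show ?thesis
    by (rule that)
qed

section \<open>The trinomials\<close>

lemma poly_trinom: "poly (trinom n a b) x = x ^ (2 * n) + of_int a * x ^ n + of_int b"
  unfolding trinom_def by (simp add: poly_monom)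

lemma complex_roots_trinom: "z \<in> complex_roots (trinom n a b) \<longleftrightarrow> z ^ (2 * n) + of_int a * z ^ n + of_int b = 0"
proof -
  have "map_poly of_rat (trinom n a b) = monom 1 (2 * n) + monom (of_int a) n + [:of_int b :: complex:]"
    unfolding trinom_def
    by (simp add: poly_eq_iff coeff_map_poly coeff_monom coeff_pCons of_rat_add split: nat.split)
  then show ?thesis
    by (simp add: complex_roots_def poly_monom)
qed

lemma trinom_nonzero:
  assumes "n \<noteq> 0"
  shows "trinom n a b \<noteq> 0"
proof -
  have "coeff (trinom n a b) (2 * n) = 1"
    using assms by (simp add: trinom_def coeff_monom coeff_pCons split: nat.split)
  then show ?thesis
    by auto
qed

lemma trinom_mult: "trinom (d * m) a b = trinom d a b \<circ>\<^sub>p monom 1 m"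
  by (subst poly_eq_poly_eq_iff[symmetric])
    (simp add: fun_eq_iff poly_trinom poly_pcompose poly_monom power_mult[symmetric] mult_ac)

lemma irreducible_pcompose_monom_imp:
  fixes p :: "'a :: field poly"
  assumes irr: "irreducible (p \<circ>\<^sub>p monom 1 m)"
  shows "irreducible p"
proof -
  have "p \<circ>\<^sub>p monom 1 m \<noteq> 0" "\<not> is_unit (p \<circ>\<^sub>p monom 1 m)"
    using irr by auto
  then have deg: "degree (p \<circ>\<^sub>p monom 1 m) \<noteq> 0"
    using is_unit_iff_degree by blast
  then have "m \<noteq> 0" "p \<noteq> 0"
    by (auto simp: degree_pcompose degree_monom_eq)
  show ?thesis
  proof (rule irreducibleI)
    show "p \<noteq> 0"
      by fact
    show "\<not> is_unit p"
      using deg is_unit_iff_degree[OF \<open>p \<noteq> 0\<close>] by (auto simp: degree_pcompose)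
  next
    fix g h
    assume "p = g * h"
    then have "p \<circ>\<^sub>p monom 1 m = (g \<circ>\<^sub>p monom 1 m) * (h \<circ>\<^sub>p monom 1 m)"
      by (simp add: pcompose_mult)
    then have "is_unit (g \<circ>\<^sub>p monom 1 m) \<or> is_unit (h \<circ>\<^sub>p monom 1 m)"
      by (rule irreducibleD[OF irr])
    then have "degree (g \<circ>\<^sub>p monom 1 m) = 0 \<or> degree (h \<circ>\<^sub>p monom 1 m) = 0"
      by (metis is_unit_iff_degree not_is_unit_0)
    then have "degree g = 0 \<or> degree h = 0"
      using \<open>m \<noteq> 0\<close> by (simp add: degree_pcompose degree_monom_eq)
    then show "is_unit g \<or> is_unit h"
      using \<open>p = g * h\<close> \<open>p \<noteq> 0\<close> is_unit_iff_degree by auto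
  qed
qed

lemma splitting_field_trinom_dvd:
  assumes "d dvd n" "n \<noteq> 0"
  shows "splitting_field_C (trinom d a b) \<subseteq> splitting_field_C (trinom n a b)"
proof (rule splitting_field_C_subset[OF subfield_C_splitting_field], rule subsetI)
  fix y
  assume y: "y \<in> complex_roots (trinom d a b)"
  obtain m where m: "n = d * m" "m \<noteq> 0"
    using assms by auto
  obtain x where x: "x ^ m = y"
    using nth_root_exists m(2) by blast
  have "x ^ n = y ^ d" "x ^ (2 * n) = y ^ (2 * d)"
    unfolding m(1) x[symmetric] by (simp_all add: power_mult[symmetric] mult_ac)
  then have "x \<in> splitting_field_C (trinom n a b)"
    using y complex_roots_subset_splitting_field by (force simp: complex_roots_trinom)
  then show "y \<in> splitting_field_C (trinom n a b)"
    using x subfield_C_power[OF subfield_C_splitting_field] by blast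
qed

section \<open>Irreducibility of the cyclotomic polynomial of prime index\<close>

lemma eisenstein_aux:
  fixes Q g h :: "int poly" and p :: int
  assumes p: "prime p" and lc: "\<not> p dvd lead_coeff Q" and coeffs: "\<And>k. k < degree Q \<Longrightarrow> p dvd coeff Q k"
    and const: "\<not> p\<^sup>2 dvd coeff Q 0" and Q: "Q = g * h" and g0: "p dvd coeff g 0"
  shows "degree h = 0"
proof (rule ccontr)
  assume "degree h \<noteq> 0"
  have h0: "\<not> p dvd coeff h 0"
  proof
    assume "p dvd coeff h 0"
    then have "p * p dvd coeff g 0 * coeff h 0"
      using g0 by (rule mult_dvd_mono[rotated])
    then show False
      using const Q by (simp add: power2_eq_square coeff_mult_0)
  qed
  have "g \<noteq> 0" "h \<noteq> 0"
    using lc Q by auto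
  have lc_g: "\<not> p dvd coeff g (degree g)"
    using lc Q by (metis dvd_mult2 lead_coeff_mult)
  define k where "k = (LEAST i. \<not> p dvd coeff g i)"
  have k: "\<not> p dvd coeff g k" "k \<le> degree g"
    unfolding k_def using lc_g by (rule LeastI, rule Least_le)
  have below_k: "p dvd coeff g i" if "i < k" for i
    using not_less_Least[OF that[unfolded k_def]] by blast
  obtain k' where k': "k = Suc k'"
    using k(1) g0 by (cases k) auto
  have "k < degree Q"
    using k(2) \<open>degree h \<noteq> 0\<close> \<open>g \<noteq> 0\<close> \<open>h \<noteq> 0\<close> Q by (simp add: degree_mult_eq)
  then have "p dvd coeff Q k"
    by (rule coeffs)
  moreover have "coeff Q k = (\<Sum>i\<le>k'. coeff g i * coeff h (k - i)) + coeff g k * coeff h 0"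
    unfolding Q coeff_mult k' by (simp add: sum.atMost_Suc)
  moreover have "p dvd (\<Sum>i\<le>k'. coeff g i * coeff h (k - i))"
    by (intro dvd_sum dvd_mult2 below_k) (simp add: k')
  ultimately have "p dvd coeff g k * coeff h 0"
    by (simp add: dvd_add_right_iff)
  then show False
    using p k(1) h0 by (simp add: prime_dvd_mult_iff)
qed

theorem eisenstein_criterion:
  fixes Q g h :: "int poly" and p :: int
  assumes p: "prime p" and lc: "\<not> p dvd lead_coeff Q" and coeffs: "\<And>k. k < degree Q \<Longrightarrow> p dvd coeff Q k"
    and const: "\<not> p\<^sup>2 dvd coeff Q 0" and Q: "Q = g * h"
  shows "degree g = 0 \<or> degree h = 0"
proof (cases "degree Q = 0")
  case True
  have "g \<noteq> 0" "h \<noteq> 0"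
    using lc Q by auto
  then show ?thesis
    using True Q by (simp add: degree_mult_eq)
next
  case False
  then have "p dvd coeff Q 0"
    using coeffs by simp
  then have "p dvd coeff g 0 \<or> p dvd coeff h 0"
    using p Q by (simp add: coeff_mult_0 prime_dvd_mult_iff)
  then show ?thesis
  proof
    assume "p dvd coeff g 0"
    then show ?thesis
      using eisenstein_aux[OF p lc coeffs const Q] by simp
  next
    assume h0: "p dvd coeff h 0"
    have "Q = h * g"
      using Q by (simp only: mult.commute)
    then show ?thesis
      using eisenstein_aux[OF p lc coeffs const _ h0] by simp
  qed
qed

definition prime_cyclotomic :: "nat \<Rightarrow> rat poly" where
  "prime_cyclotomic p = (\<Sum>i<p. monom 1 i)"

definition shifted_prime_cyclotomic :: "nat \<Rightarrow> int poly" where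
  "shifted_prime_cyclotomic p = (\<Sum>k<p. monom (int (p choose (k + 1))) k)"

lemma poly_prime_cyclotomic: "poly (prime_cyclotomic p) x = (\<Sum>i<p. x ^ i)"
  by (simp add: prime_cyclotomic_def poly_sum poly_monom)

lemma poly_map_poly_of_rat_prime_cyclotomic:
  "poly (map_poly of_rat (prime_cyclotomic p)) (z :: 'a :: field_char_0) = (\<Sum>i<p. z ^ i)"
  unfolding prime_cyclotomic_def by (induction p) (simp_all add: hom_distribs map_poly_monom poly_monom)

lemma poly_shifted_prime_cyclotomic:
  "poly (map_poly of_int (shifted_prime_cyclotomic p)) (x :: 'a :: comm_ring_1) =
    (\<Sum>k<p. of_nat (p choose Suc k) * x ^ k)"
  unfolding shifted_prime_cyclotomic_def by (simp add: hom_distribs poly_sum poly_monom)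

lemma coeff_shifted_prime_cyclotomic:
  "coeff (shifted_prime_cyclotomic p) k = (if k < p then int (p choose (k + 1)) else 0)"
  unfolding shifted_prime_cyclotomic_def coeff_sum coeff_monom by (simp add: sum.delta)

lemma degree_shifted_prime_cyclotomic: "0 < p \<Longrightarrow> degree (shifted_prime_cyclotomic p) = p - 1"
  by (intro antisym degree_le le_degree) (auto simp: coeff_shifted_prime_cyclotomic)

lemma prime_cyclotomic_pcompose_shift:
  assumes "0 < p"
  shows "prime_cyclotomic p \<circ>\<^sub>p [:1, 1:] = map_poly of_int (shifted_prime_cyclotomic p)"
proof -
  have "x * poly (prime_cyclotomic p \<circ>\<^sub>p [:1, 1:]) x = x * poly (map_poly of_int (shifted_prime_cyclotomic p)) x"
    for x :: rat
  proof -
    have "x * poly (prime_cyclotomic p \<circ>\<^sub>p [:1, 1:]) x = ((x + 1) - 1) * (\<Sum>i<p. (x + 1) ^ i)"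
      by (simp add: poly_pcompose poly_prime_cyclotomic add.commute)
    also have "\<dots> = (x + 1) ^ p - 1"
      by (rule power_diff_1_eq[symmetric])
    also have "\<dots> = (\<Sum>k\<le>p. of_nat (p choose k) * x ^ k) - 1"
      by (simp add: binomial_ring)
    also have "\<dots> = (\<Sum>k<p. of_nat (p choose Suc k) * x ^ Suc k)"
      by (subst lessThan_Suc_atMost[symmetric], subst sum.lessThan_Suc_shift) simp
    also have "\<dots> = x * (\<Sum>k<p. of_nat (p choose Suc k) * x ^ k)"
      by (simp add: sum_distrib_left mult.left_commute)
    also have "\<dots> = x * poly (map_poly of_int (shifted_prime_cyclotomic p)) x"
      by (simp only: poly_shifted_prime_cyclotomic)
    finally show ?thesis .
  qed
  then have "[:0, 1:] * (prime_cyclotomic p \<circ>\<^sub>p [:1, 1:]) = [:0, 1:] * map_poly of_int (shifted_prime_cyclotomic p)"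
    by (subst poly_eq_poly_eq_iff[symmetric]) (simp add: fun_eq_iff)
  then show ?thesis
    by simp
qed

lemma eisenstein_shifted_prime_cyclotomic:
  assumes p: "prime p" and gh: "shifted_prime_cyclotomic p = g * h"
  shows "degree g = 0 \<or> degree h = 0"
proof (rule eisenstein_criterion[of "int p", OF _ _ _ _ gh])
  have p2: "2 \<le> p" and p0: "0 < p"
    using p by (simp_all add: prime_ge_2_nat prime_gt_0_nat)
  show "prime (int p)"
    using p by simp
  show "\<not> int p dvd lead_coeff (shifted_prime_cyclotomic p)"
    using p2 by (simp add: degree_shifted_prime_cyclotomic coeff_shifted_prime_cyclotomic)
  show "int p dvd coeff (shifted_prime_cyclotomic p) k" if "k < degree (shifted_prime_cyclotomic p)" for k
    using that p2 dvd_choose_prime[OF _ _ _ p, of "k + 1"]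
    by (simp add: degree_shifted_prime_cyclotomic coeff_shifted_prime_cyclotomic)
  have "\<not> int p * int p dvd int p * 1"
    using p2 by (subst dvd_mult_cancel_left) auto
  then show "\<not> (int p)\<^sup>2 dvd coeff (shifted_prime_cyclotomic p) 0"
    using p0 by (simp add: coeff_shifted_prime_cyclotomic power2_eq_square)
qed

theorem irreducible_prime_cyclotomic:
  assumes p: "prime p"
  shows "irreducible (prime_cyclotomic p)"
proof -
  have p2: "2 \<le> p" and p0: "0 < p"
    using p by (simp_all add: prime_ge_2_nat prime_gt_0_nat)
  have "degree (prime_cyclotomic p) = degree (prime_cyclotomic p \<circ>\<^sub>p [:1, 1:])"
    by (simp add: degree_pcompose)
  also have "\<dots> = degree (shifted_prime_cyclotomic p)"
    unfolding prime_cyclotomic_pcompose_shift[OF p0] by (simp add: degree_map_poly)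
  finally have deg: "degree (prime_cyclotomic p) = p - 1"
    using p2 by (simp add: degree_shifted_prime_cyclotomic)
  then have nonzero: "prime_cyclotomic p \<noteq> 0"
    using p2 by auto
  show ?thesis
  proof (rule irreducibleI)
    show "\<not> is_unit (prime_cyclotomic p)"
      using deg p2 is_unit_iff_degree[OF nonzero] by simp
  next
    fix g h
    assume gh: "prime_cyclotomic p = g * h"
    have "map_poly of_int (shifted_prime_cyclotomic p) = (g \<circ>\<^sub>p [:1, 1:]) * (h \<circ>\<^sub>p [:1, 1:])"
      by (simp only: prime_cyclotomic_pcompose_shift[OF p0, symmetric] gh pcompose_mult)
    then obtain g' h' where g'h': "shifted_prime_cyclotomic p = g' * h'"
      "degree g' = degree (g \<circ>\<^sub>p [:1, 1:])" "degree h' = degree (h \<circ>\<^sub>p [:1, 1:])"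
      using rat_to_int_factor by blast
    have "degree g = 0 \<or> degree h = 0"
      using eisenstein_shifted_prime_cyclotomic[OF p g'h'(1)] g'h'(2,3) by simp
    then show "is_unit g \<or> is_unit h"
      using gh nonzero is_unit_iff_degree by auto
  qed fact
qed

section \<open>Roots of unity of prime order\<close>

definition zeta :: "nat \<Rightarrow> complex" where
  "zeta p = cis (2 * pi / real p)"

lemma zeta_power: "zeta p ^ k = cis (2 * pi * real k / real p)"
  unfolding zeta_def DeMoivre by (simp add: field_simps)

lemma zeta_power_order: "0 < p \<Longrightarrow> zeta p ^ p = 1"
  unfolding zeta_power by (simp add: complex_eq_iff)

lemma root_of_unity_zeta_power:
  assumes "0 < p" "z ^ p = 1"
  obtains k where "z = zeta p ^ k"
  using bij_betw_roots_unity[of p] assms unfolding bij_betw_def zeta_power by auto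

lemma zeta_power_eq_iff:
  assumes p: "0 < p"
  shows "zeta p ^ i = zeta p ^ j \<longleftrightarrow> int p dvd int i - int j"
proof -
  have mod: "zeta p ^ k = zeta p ^ (k mod p)" for k
    by (metis div_mult_mod_eq mult.commute power_add power_mult power_one mult_1 zeta_power_order[OF p])
  have inj: "inj_on (\<lambda>k. zeta p ^ k) {..<p}"
    using bij_betw_roots_unity[OF p] unfolding bij_betw_def zeta_power by simp
  have "zeta p ^ i = zeta p ^ j \<longleftrightarrow> i mod p = j mod p"
    using inj_onD[OF inj, of "i mod p" "j mod p"] mod[of i] mod[of j] p by auto
  also have "\<dots> \<longleftrightarrow> int p dvd int i - int j"
    by (metis mod_eq_dvd_iff of_nat_eq_iff zmod_int)
  finally show ?thesis .
qed

lemma zeta_power_prime_cyclotomic_root: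
  assumes p: "0 < p" and k: "\<not> int p dvd int k"
  shows "zeta p ^ k \<in> complex_roots (prime_cyclotomic p)"
proof -
  have "(zeta p ^ k) ^ p = 1"
    by (metis power_mult mult.commute power_one zeta_power_order[OF p])
  moreover have "zeta p ^ k \<noteq> 1"
    using zeta_power_eq_iff[OF p, of k 0] k by simp
  ultimately have "(\<Sum>i<p. (zeta p ^ k) ^ i) = 0"
    using power_diff_1_eq[of "zeta p ^ k" p] by simp
  then show ?thesis
    by (simp add: complex_roots_def poly_map_poly_of_rat_prime_cyclotomic)
qed

section \<open>The case of a prime exponent\<close>

lemma prime_linear_congruence_solvable:
  assumes p: "prime p" and u: "\<not> int p dvd u"
  obtains j :: nat where "int p dvd u * int j + 1"
proof -
  have "prime (int p)"
    using p by simp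
  then obtain x where "[u * x = 1] (mod int p)"
    using cong_solve_coprime_int[OF prime_imp_coprime[OF _ u, THEN Rings.coprime_commute[THEN iffD1]]]
    by blast
  moreover have "[int (nat ((- x) mod int p)) = - x] (mod int p)"
    using p by (simp add: cong_def prime_gt_0_nat)
  ultimately have "[u * int (nat ((- x) mod int p)) + 1 = 0] (mod int p)"
    by (metis add.left_inverse cong_add cong_mult cong_refl cong_sym mult_minus_right)
  then show ?thesis
    using that cong_0_iff by blast
qed

locale abelian_prime_trinom =
  fixes p :: nat and a b :: int and \<alpha> \<theta> :: complex
  assumes prime_p: "prime p" and p_ge_5: "5 \<le> p"
    and irreducible_F: "irreducible (trinom p a b)" and b_nonzero: "b \<noteq> 0"
    and abelian_F: "galois_abelian (trinom p a b)"
    and alpha_root: "\<alpha>\<^sup>2 + of_int a * \<alpha> + of_int b = 0" and theta_power: "\<theta> ^ p = \<alpha>"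
begin

abbreviation K where "K \<equiv> splitting_field_C (trinom p a b)"
abbreviation G where "G \<equiv> galois_group_C (trinom p a b)"
abbreviation \<zeta> where "\<zeta> \<equiv> zeta p"

lemma p_pos: "0 < p"
  using p_ge_5 by simp

lemma p_not_dvd: "0 < k \<Longrightarrow> k < 5 \<Longrightarrow> \<not> int p dvd int k"
  using p_ge_5 by (auto dest: dvd_imp_le)

lemma zeta_power_eq_iff': "\<zeta> ^ i = \<zeta> ^ j \<longleftrightarrow> int p dvd int i - int j"
  by (rule zeta_power_eq_iff[OF p_pos])

lemma K_subfield: "subfield_C K"
  by (rule subfield_C_splitting_field)

lemma F_nonzero: "trinom p a b \<noteq> 0"
  using p_pos by (simp add: trinom_nonzero)

lemma zeta_power_theta_root: "\<zeta> ^ j * \<theta> \<in> complex_roots (trinom p a b)"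
proof -
  have "(\<zeta> ^ j * \<theta>) ^ p = \<alpha>"
    using zeta_power_order[OF p_pos] theta_power
    by (metis power_mult_distrib power_mult mult.commute power_one mult_1)
  then show ?thesis
    using alpha_root by (simp add: complex_roots_trinom power_mult mult.commute[of 2])
qed

lemma alpha_nonzero: "\<alpha> \<noteq> 0"
  using alpha_root b_nonzero by auto

lemma theta_nonzero: "\<theta> \<noteq> 0"
  using alpha_nonzero theta_power p_pos by (auto simp: zero_power)

lemma theta_root: "\<theta> \<in> complex_roots (trinom p a b)"
  using zeta_power_theta_root[of 0] by simp

lemma theta_in_K: "\<theta> \<in> K"
  using theta_root complex_roots_subset_splitting_field by auto

lemma alpha_in_K: "\<alpha> \<in> K"
  using theta_power subfield_C_power[OF K_subfield theta_in_K] by blast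

lemma zeta_in_K: "\<zeta> \<in> K"
proof -
  have "\<zeta> * \<theta> \<in> K"
    using zeta_power_theta_root[of 1] complex_roots_subset_splitting_field by auto
  then show ?thesis
    using subfield_C_divide[OF K_subfield _ theta_in_K] theta_nonzero by force
qed

lemma galois_commute: "g \<in> G \<Longrightarrow> h \<in> G \<Longrightarrow> g (h x) = h (g x)"
  using abelian_F unfolding galois_abelian_def by (metis comp_apply)

lemma galois_image_zeta:
  assumes g: "g \<in> G"
  obtains k where "g \<zeta> = \<zeta> ^ k" "\<not> int p dvd int k"
proof -
  note hom = field_hom_on_galois_group_C[OF g]
  have "(g \<zeta>) ^ p = 1"
    using field_hom_on_power[OF K_subfield hom zeta_in_K, of p] zeta_power_order[OF p_pos]
      field_hom_on_1[OF K_subfield hom]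
    by simp
  then obtain k where k: "g \<zeta> = \<zeta> ^ k"
    using root_of_unity_zeta_power[OF p_pos] by blast
  have "\<zeta> \<noteq> 1"
    using zeta_power_eq_iff'[of 1 0] p_not_dvd[of 1] by simp
  then have "g \<zeta> \<noteq> g 1"
    using galois_group_C_inj_on[OF g] zeta_in_K subfield_C_1[OF K_subfield] by (auto dest: inj_onD)
  then have "\<not> int p dvd int k"
    using k zeta_power_eq_iff'[of k 0] field_hom_on_1[OF K_subfield hom] by auto
  with k show ?thesis
    using that by blast
qed

text \<open>Evaluate \<open>h \<circ> \<sigma> = \<sigma> \<circ> h\<close> at \<open>\<theta>\<close>.\<close>

lemma commuting_exponents:
  assumes \<sigma>: "\<sigma> \<in> G" "\<sigma> \<theta> = \<zeta> * \<theta>" "\<sigma> \<zeta> = \<zeta> ^ c"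
    and h: "h \<in> G" "h \<theta> = \<zeta> ^ j * \<theta>" "h \<zeta> = \<zeta> ^ k"
  shows "int p dvd (int k + int j) - (int c * int j + 1)"
proof -
  note \<sigma>_hom = field_hom_on_galois_group_C[OF \<sigma>(1)] and h_hom = field_hom_on_galois_group_C[OF h(1)]
  have "h (\<sigma> \<theta>) = \<zeta> ^ (k + j) * \<theta>"
    using \<sigma>(2) h field_hom_on_mult[OF K_subfield h_hom zeta_in_K theta_in_K] by (simp add: power_add)
  moreover have "\<sigma> (h \<theta>) = \<zeta> ^ (c * j + 1) * \<theta>"
    using h(2) \<sigma>(2,3) field_hom_on_mult[OF K_subfield \<sigma>_hom subfield_C_power[OF K_subfield zeta_in_K] theta_in_K]
      field_hom_on_power[OF K_subfield \<sigma>_hom zeta_in_K]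
    by (simp add: power_add power_mult)
  ultimately have "\<zeta> ^ (k + j) = \<zeta> ^ (c * j + 1)"
    using galois_commute[OF h(1) \<sigma>(1)] theta_nonzero by simp
  then show ?thesis
    using zeta_power_eq_iff'[of "k + j" "c * j + 1"] by (simp add: add.commute)
qed

lemma rotation_fixes_zeta:
  assumes \<sigma>: "\<sigma> \<in> G" "\<sigma> \<theta> = \<zeta> * \<theta>"
  shows "\<sigma> \<zeta> = \<zeta>"
proof -
  obtain c where c: "\<sigma> \<zeta> = \<zeta> ^ c"
    using galois_image_zeta[OF \<sigma>(1)] by blast
  have "int p dvd int c - 1"
  proof (rule ccontr)
    assume "\<not> int p dvd int c - 1"
    then obtain j :: nat where j: "int p dvd (int c - 1) * int j + 1"
      using prime_linear_congruence_solvable[OF prime_p] by blast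
    obtain h where h: "h \<in> G" "h \<theta> = \<zeta> ^ j * \<theta>"
      using galois_group_C_transitive[OF F_nonzero irreducible_F theta_in_K
          theta_root zeta_power_theta_root[of j]]
      by auto
    obtain k where k: "h \<zeta> = \<zeta> ^ k" "\<not> int p dvd int k"
      using galois_image_zeta[OF h(1)] by blast
    have "int p dvd ((int k + int j) - (int c * int j + 1)) + ((int c - 1) * int j + 1)"
      using commuting_exponents[OF \<sigma> c h k(1)] j by (rule dvd_add)
    then show False
      using k(2) by (simp add: algebra_simps)
  qed
  then show ?thesis
    using c zeta_power_eq_iff'[of c 1] by simp
qed

lemma stabilizer_fixes_zeta:
  assumes h: "h \<in> G" "h \<alpha> = \<alpha>"
  shows "h \<zeta> = \<zeta>"
proof -
  note hom = field_hom_on_galois_group_C[OF h(1)]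
  have "(h \<theta>) ^ p = \<alpha>"
    using field_hom_on_power[OF K_subfield hom theta_in_K, of p] theta_power h(2) by simp
  then have "(h \<theta> / \<theta>) ^ p = 1"
    using theta_power alpha_nonzero by (simp add: power_divide)
  then obtain j where "h \<theta> / \<theta> = \<zeta> ^ j"
    using root_of_unity_zeta_power[OF p_pos] by blast
  then have hj: "h \<theta> = \<zeta> ^ j * \<theta>"
    using theta_nonzero by (simp add: field_simps)
  obtain \<sigma> where \<sigma>: "\<sigma> \<in> G" "\<sigma> \<theta> = \<zeta> * \<theta>"
    using galois_group_C_transitive[OF F_nonzero irreducible_F theta_in_K
        theta_root zeta_power_theta_root[of 1]]
    by auto
  obtain k where k: "h \<zeta> = \<zeta> ^ k"
    using galois_image_zeta[OF h(1)] by blast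
  have "\<sigma> \<zeta> = \<zeta> ^ 1"
    using rotation_fixes_zeta[OF \<sigma>] by simp
  from commuting_exponents[OF \<sigma> this h(1) hj k] have "int p dvd int k - int 1"
    by simp
  then show ?thesis
    using k zeta_power_eq_iff'[of k 1] by simp
qed

lemma conjugate_alpha:
  assumes g: "g \<in> G" "g \<alpha> \<noteq> \<alpha>"
  shows "g \<alpha> = - of_int a - \<alpha>"
proof -
  note hom = field_hom_on_galois_group_C[OF g(1)]
  have "g (\<alpha>\<^sup>2 + of_int a * \<alpha> + of_int b) = (g \<alpha>)\<^sup>2 + of_int a * g \<alpha> + of_int b"
    using alpha_in_K subfield_C_of_int[OF K_subfield] subfield_C_power[OF K_subfield]
      subfield_C_mult[OF K_subfield] subfield_C_add[OF K_subfield]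
    by (simp add: field_hom_on_add[OF K_subfield hom] field_hom_on_mult[OF K_subfield hom]
        field_hom_on_power[OF K_subfield hom] field_hom_on_of_int[OF K_subfield hom])
  then have "(g \<alpha>)\<^sup>2 + of_int a * g \<alpha> + of_int b = 0"
    using alpha_root field_hom_on_0[OF K_subfield hom] by simp
  moreover have "(g \<alpha> - \<alpha>) * (g \<alpha> + \<alpha> + of_int a) =
      ((g \<alpha>)\<^sup>2 + of_int a * g \<alpha> + of_int b) - (\<alpha>\<^sup>2 + of_int a * \<alpha> + of_int b)"
    by (simp add: algebra_simps power2_eq_square)
  ultimately have "g \<alpha> + \<alpha> + of_int a = 0"
    using alpha_root g(2) by simp
  moreover have "g \<alpha> = (g \<alpha> + \<alpha> + of_int a) - of_int a - \<alpha>"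
    by simp
  ultimately show ?thesis
    by simp
qed

lemma non_stabilizers_agree_on_zeta:
  assumes g: "g \<in> G" "g \<alpha> \<noteq> \<alpha>" and h: "h \<in> G" "h \<alpha> \<noteq> \<alpha>"
  shows "g \<zeta> = h \<zeta>"
proof -
  have swap: "\<sigma> (\<tau> \<alpha>) = \<alpha>" if "\<sigma> \<in> G" "\<sigma> \<alpha> \<noteq> \<alpha>" "\<tau> \<in> G" "\<tau> \<alpha> \<noteq> \<alpha>" for \<sigma> \<tau>
  proof -
    note hom = field_hom_on_galois_group_C[OF that(1)]
    have "\<sigma> (- of_int a - \<alpha>) = - of_int a - \<sigma> \<alpha>"
      using field_hom_on_diff[OF K_subfield hom subfield_C_uminus[OF K_subfield subfield_C_of_int[OF K_subfield]]
          alpha_in_K] field_hom_on_of_int[OF K_subfield hom, of "- a"]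
      by simp
    then show ?thesis
      unfolding conjugate_alpha[OF that(3,4)] conjugate_alpha[OF that(1,2)] by simp
  qed
  have "g (h \<zeta>) = \<zeta>" "g (g \<zeta>) = \<zeta>"
    using stabilizer_fixes_zeta[OF galois_group_C_comp, OF g(1) h(1)]
      stabilizer_fixes_zeta[OF galois_group_C_comp, OF g(1) g(1)] swap[OF g h] swap[OF g g]
    by simp_all
  then show ?thesis
    using galois_group_C_inj_on[OF g(1)] galois_group_C_maps_to[OF g(1) zeta_in_K]
      galois_group_C_maps_to[OF h(1) zeta_in_K]
    by (metis inj_onD)
qed

text \<open>The conjugates \<open>\<zeta>, \<zeta>\<^sup>2, \<zeta>\<^sup>3\<close> are distinct, but by the previous two lemmas \<open>\<zeta>\<close> has at most
  two conjugates.\<close>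

theorem absurd: False
proof -
  have cyclotomic_root: "\<zeta> ^ k \<in> complex_roots (prime_cyclotomic p)" if "0 < k" "k < 5" for k
    by (rule zeta_power_prime_cyclotomic_root[OF p_pos p_not_dvd[OF that]])
  have zeta_root: "\<zeta> \<in> complex_roots (prime_cyclotomic p)"
    using cyclotomic_root[of 1] by simp
  note transitive = galois_group_C_transitive[OF F_nonzero irreducible_prime_cyclotomic[OF prime_p] zeta_in_K zeta_root]
  obtain g2 where g2: "g2 \<in> G" "g2 \<zeta> = \<zeta> ^ 2"
    using transitive[OF cyclotomic_root[of 2]] by auto
  obtain g3 where g3: "g3 \<in> G" "g3 \<zeta> = \<zeta> ^ 3"
    using transitive[OF cyclotomic_root[of 3]] by auto
  have distinct: "\<zeta> ^ i \<noteq> \<zeta> ^ j" if "0 < i" "i < j" "j < 5" for i j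
    using zeta_power_eq_iff'[of j i] p_not_dvd[of "j - i"] that by (simp add: of_nat_diff)
  have "g2 \<alpha> \<noteq> \<alpha>" "g3 \<alpha> \<noteq> \<alpha>"
    using stabilizer_fixes_zeta[OF g2(1)] stabilizer_fixes_zeta[OF g3(1)] g2(2) g3(2)
      distinct[of 1 2] distinct[of 1 3]
    by fastforce+
  then have "\<zeta> ^ 2 = \<zeta> ^ 3"
    using non_stabilizers_agree_on_zeta g2 g3 by metis
  then show False
    using distinct[of 2 3] by simp
qed

end

lemma not_galois_abelian_prime_trinom:
  assumes "prime p" "5 \<le> p" "irreducible (trinom p a b)" "b \<noteq> 0"
  shows "\<not> galois_abelian (trinom p a b)"
proof
  assume abelian: "galois_abelian (trinom p a b)"
  obtain \<alpha> :: complex where \<alpha>: "poly [:of_int b, of_int a, 1:] \<alpha> = 0"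
    using alg_closed_imp_poly_has_root[of "[:of_int b, of_int a, 1 :: complex:]"] by auto
  obtain \<theta> where "\<theta> ^ p = \<alpha>"
    using nth_root_exists assms(2) by (metis not_numeral_le_zero not_gr_zero)
  with \<alpha> have "abelian_prime_trinom p a b \<alpha> \<theta>"
    using assms abelian by unfold_locales (simp_all add: algebra_simps power2_eq_square)
  then show False
    by (rule abelian_prime_trinom.absurd)
qed

lemma two_three_smooth:
  fixes n :: nat
  assumes "n \<noteq> 0" "\<And>q. prime q \<Longrightarrow> q dvd n \<Longrightarrow> q \<le> 3"
  shows "\<exists>r s. n = 2 ^ r * 3 ^ s"
  using assms
proof (induction n rule: less_induct)
  case (less n)
  show ?case
  proof (cases "n = 1")
    case True
    then show ?thesis
      by (intro exI[of _ 0]) simp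
  next
    case False
    then obtain q m where q: "prime q" "n = q * m"
      using prime_factor_nat[of n] by (auto elim: dvdE)
    have "q = 2 \<or> q = 3"
      using less.prems(2)[of q] q prime_ge_2_nat[of q] by auto
    moreover have "\<exists>r s. m = 2 ^ r * 3 ^ s"
      using q less.prems prime_gt_1_nat[of q] by (intro less.IH) auto
    then obtain r s where "m = 2 ^ r * 3 ^ s"
      by blast
    ultimately have "n = 2 ^ Suc r * 3 ^ s \<or> n = 2 ^ r * 3 ^ Suc s"
      using q(2) by auto
    then show ?thesis
      by blast
  qed
qed

lemma prime_le_3_or_ge_5: "prime (q :: nat) \<Longrightarrow> q \<le> 3 \<or> 5 \<le> q"
  using prime_product[of 2 2] by (cases "q = 4") auto

theorem lemma2p1:
  fixes n :: nat and a b :: int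
  assumes "n \<ge> 1" and "a * b \<noteq> 0"
    and "irreducible (trinom n a b)"
    and "galois_abelian (trinom n a b)"
  shows "(\<exists>r s :: nat. n = 2 ^ r * 3 ^ s) \<and>
         (\<forall>d :: nat. d \<ge> 1 \<and> d dvd n \<longrightarrow> galois_abelian (trinom d a b))"
proof -
  have n: "n \<noteq> 0" and b: "b \<noteq> 0"
    using assms(1,2) by auto
  have divisor_abelian: "galois_abelian (trinom d a b)" if "d dvd n" for d
    by (rule galois_abelian_mono[OF trinom_nonzero[OF n] splitting_field_trinom_dvd[OF that n] assms(4)])
  have "q \<le> 3" if q: "prime q" "q dvd n" for q
  proof -
    obtain m where "n = q * m"
      using q(2) by blast
    then have "irreducible (trinom q a b)"
      using assms(3) by (metis trinom_mult irreducible_pcompose_monom_imp)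
    then show ?thesis
      using not_galois_abelian_prime_trinom[OF q(1) _ _ b] divisor_abelian[OF q(2)] prime_le_3_or_ge_5[OF q(1)]
      by blast
  qed
  then show ?thesis
    using two_three_smooth[OF n] divisor_abelian by blast
qed

end
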